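(* Assume the setting below. For every $\epsilon,\eta>0$ there is $\tilde N$ such that for all $N\ge\tilde N$, $\mathbb P\big(\mu_N^{\otimes2}(R_{12}<-\epsilon)>\epsilon/3\big)<\eta.$
   Context: Setting: $\{\mu_N\}$ random Borel probability measures on the closed unit ball of $\ell_2$ on a probability space $(\Omega,\mathcal F,\mathbb P)$; given $\mu_N$, $\sigma^1,\sigma^2,\dots$ are i.i.d. from $\mu_N$, $R_{ij}=(\sigma^i,\sigma^j)$, $R^n=(R_{ij})_{i,j\le n}$, $\langle\cdot\rangle_N$ the corresponding expectation. Assume the Approximate Ghirlanda–Guerra identities: for all $n$, bounded Borel $f$ on $[-1,1]^{n^2}$, $\psi\in C[-1,1]$, $\lim_N|n\mathbb E\langle f(R^n)\psi(R_{1,n+1})\rangle_N-\mathbb E\langle f(R^n)\rangle_N\mathbb E\langle\psi(R_{12})\rangle_N-\sum_{k=2}^n\mathbb E\langle f(R^n)\psi(R_{1k})\rangle_N|=0$; and $\zeta_N=\mathbb E\mu_N^{\otimes2}(R_{12}\in\cdot)\to\zeta$ weakly for some probability measure $\zeta$ on $[-1,1]$. *)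

theory Defs
  imports "HOL-Probability.Probability"
begin

definition ball_space :: "'h::real_normed_vector measure" where
  "ball_space = restrict_space borel (cball 0 1)"

text \<open>Gibbs average with m replicas: integral over the m-fold product of M.
  Replicas are indexed 0..m-1 (replica i+1 of the paper is index i).\<close>
definition gibbs_avg :: "'h measure \<Rightarrow> nat \<Rightarrow> ((nat \<Rightarrow> 'h) \<Rightarrow> real) \<Rightarrow> real" where
  "gibbs_avg M m g = (\<integral>\<sigma>. g \<sigma> \<partial>(PiM {..<m} (\<lambda>_. M)))"

definition Eavg :: "'w measure \<Rightarrow> ('w \<Rightarrow> 'h measure) \<Rightarrow> nat \<Rightarrow> ((nat \<Rightarrow> 'h) \<Rightarrow> real) \<Rightarrow> real" where
  "Eavg P \<mu> m g = (\<integral>\<omega>. gibbs_avg (\<mu> \<omega>) m g \<partial>P)"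

definition gram :: "nat \<Rightarrow> (nat \<Rightarrow> 'h::real_inner) \<Rightarrow> (nat \<times> nat \<Rightarrow> real)" where
  "gram n \<sigma> = restrict (\<lambda>(i,j). inner (\<sigma> i) (\<sigma> j)) ({..<n} \<times> {..<n})"

end

theory Submission
  imports Defs
begin

(* Talagrand's positivity principle, in Panchenko's form. Let Q_m be the product, over distinct
   i, k < m, of cutoff e d m (R_ik): a continuous version of the indicator that all overlaps of m
   replicas lie below -e + (m - 1) d. Dropping replica m from Q_(m+1) costs at most the sum over
   l < m of Q_m (1 - cutoff e d (m + 1) (R_lm)^2). By symmetry of the replicas these terms have
   equal Gibbs averages, and the Ghirlanda-Guerra identities evaluate them up to a vanishing error,
   because the remaining terms of the identity vanish on the support of Q_m. Hence
   E<Q_(m+1)> >= E<Q_m> p - error with p = E<cutoff e d 2 (R_12)^2>, and E<Q_n> >= p^(n-1) - errors.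
   For n about 2/e and d small, Q_n vanishes identically on the unit ball, since
   |sum_i sigma_i|^2 >= 0 forbids n vectors of norm at most 1 with all pairwise overlaps below -e/2.
   So p tends to 0, and as cutoff e d 2 = 1 below -e, Markov's inequality concludes. *)

section \<open>Random product measures and Gibbs averages\<close>

lemma measurable_prob_algebra_PiM:
  fixes B :: "'h measure"
  assumes \<mu>: "\<mu> \<in> P \<rightarrow>\<^sub>M prob_algebra B"
  shows "(\<lambda>\<omega>. PiM I (\<lambda>_. \<mu> \<omega>)) \<in> P \<rightarrow>\<^sub>M prob_algebra (PiM I (\<lambda>_. B))"
proof (rule measurable_prob_algebra_generated[where \<Omega>="space (PiM I (\<lambda>_. B))" and G="prod_algebra I (\<lambda>_. B)"])
  have \<mu>\<omega>: "prob_space (\<mu> \<omega>)" "sets (\<mu> \<omega>) = sets B" if "\<omega> \<in> space P" for \<omega>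
    using measurable_space[OF \<mu> that] by (auto simp: space_prob_algebra)
  show "sets (Pi\<^sub>M I (\<lambda>_. B)) = sigma_sets (space (Pi\<^sub>M I (\<lambda>_. B))) (prod_algebra I (\<lambda>_. B))"
    by (simp add: sets_PiM space_PiM)
  show "Int_stable (prod_algebra I (\<lambda>_. B))" by (rule Int_stable_prod_algebra)
  show "prod_algebra I (\<lambda>_. B) \<subseteq> Pow (space (Pi\<^sub>M I (\<lambda>_. B)))"
    using prod_algebra_sets_into_space by (simp add: space_PiM)
  show "prob_space (Pi\<^sub>M I (\<lambda>_. \<mu> \<omega>))" "sets (Pi\<^sub>M I (\<lambda>_. \<mu> \<omega>)) = sets (Pi\<^sub>M I (\<lambda>_. B))"
    if "\<omega> \<in> space P" for \<omega>
    using \<mu>\<omega>[OF that] by (auto intro!: prob_space_PiM sets_PiM_cong)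
  fix A assume "A \<in> prod_algebra I (\<lambda>_. B)"
  then obtain J E where A: "A = prod_emb I (\<lambda>_. B) J (\<Pi>\<^sub>E j\<in>J. E j)"
    and J: "finite J" "J \<subseteq> I" and E: "\<And>i. i \<in> J \<Longrightarrow> E i \<in> sets B"
    by (rule prod_algebraE) blast
  have "emeasure (Pi\<^sub>M I (\<lambda>_. \<mu> \<omega>)) A = (\<Prod>j\<in>J. emeasure (\<mu> \<omega>) (E j))" if "\<omega> \<in> space P" for \<omega>
  proof -
    have "A = prod_emb I (\<lambda>_. \<mu> \<omega>) J (\<Pi>\<^sub>E j\<in>J. E j)"
      using A sets_eq_imp_space_eq[OF \<mu>\<omega>(2)[OF that]] by (simp add: prod_emb_def)
    then show ?thesis using \<mu>\<omega>[OF that] J E by (auto intro!: emeasure_PiM_emb)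
  qed
  moreover have "(\<lambda>\<omega>. \<Prod>j\<in>J. emeasure (\<mu> \<omega>) (E j)) \<in> borel_measurable P"
    using E by (intro borel_measurable_prod_ennreal)
      (auto intro: measurable_compose[OF measurable_prob_algebraD[OF \<mu>] measurable_emeasure_subprob_algebra])
  ultimately show "(\<lambda>\<omega>. emeasure (Pi\<^sub>M I (\<lambda>_. \<mu> \<omega>)) A) \<in> borel_measurable P"
    by (subst measurable_cong) auto
qed

lemma random_ball_measureD:
  fixes \<mu> :: "'w \<Rightarrow> 'h::real_normed_vector measure"
  assumes \<mu>: "\<mu> \<in> P \<rightarrow>\<^sub>M prob_algebra ball_space" and \<omega>: "\<omega> \<in> space P"
  shows "prob_space (\<mu> \<omega>)" "sets (\<mu> \<omega>) = sets ball_space" "space (\<mu> \<omega>) = cball 0 1"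
proof -
  show "prob_space (\<mu> \<omega>)" and sets: "sets (\<mu> \<omega>) = sets ball_space"
    using measurable_space[OF \<mu> \<omega>] by (auto simp: space_prob_algebra)
  show "space (\<mu> \<omega>) = cball 0 1"
    using sets_eq_imp_space_eq[OF sets] by (simp add: ball_space_def space_restrict_space)
qed

definition replica_observable :: "nat \<Rightarrow> ((nat \<Rightarrow> 'h::real_normed_vector) \<Rightarrow> real) \<Rightarrow> bool" where
  "replica_observable m g \<longleftrightarrow>
     g \<in> borel_measurable (PiM {..<m} (\<lambda>_. ball_space)) \<and> (\<exists>C. \<forall>\<sigma>. \<bar>g \<sigma>\<bar> \<le> C)"

lemma replica_observable_binop:
  assumes g: "replica_observable m g" and h: "replica_observable m h"
    and op: "(\<lambda>(x, y). op x y) \<in> borel_measurable (borel \<Otimes>\<^sub>M borel)"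
    and op_bounded: "\<And>C D. \<exists>E. \<forall>x y. \<bar>x\<bar> \<le> C \<longrightarrow> \<bar>y\<bar> \<le> D \<longrightarrow> \<bar>op x y\<bar> \<le> E"
  shows "replica_observable m (\<lambda>\<sigma>. op (g \<sigma>) (h \<sigma>))"
proof -
  obtain C D where C: "\<And>\<sigma>. \<bar>g \<sigma>\<bar> \<le> C" and D: "\<And>\<sigma>. \<bar>h \<sigma>\<bar> \<le> D"
    using g h unfolding replica_observable_def by metis
  obtain E where "\<And>x y. \<bar>x\<bar> \<le> C \<Longrightarrow> \<bar>y\<bar> \<le> D \<Longrightarrow> \<bar>op x y\<bar> \<le> E" using op_bounded by blast
  then have "\<forall>\<sigma>. \<bar>op (g \<sigma>) (h \<sigma>)\<bar> \<le> E" using C D by blast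
  moreover have "(\<lambda>\<sigma>. (g \<sigma>, h \<sigma>)) \<in> PiM {..<m} (\<lambda>_. ball_space) \<rightarrow>\<^sub>M borel \<Otimes>\<^sub>M borel"
    using g h unfolding replica_observable_def by (intro measurable_Pair) auto
  from measurable_compose[OF this op]
  have "(\<lambda>\<sigma>. op (g \<sigma>) (h \<sigma>)) \<in> borel_measurable (PiM {..<m} (\<lambda>_. ball_space))" by simp
  ultimately show ?thesis unfolding replica_observable_def by blast
qed

lemma replica_observable_const: "replica_observable m (\<lambda>_. c)"
  unfolding replica_observable_def by auto

lemma replica_observable_add:
  "replica_observable m g \<Longrightarrow> replica_observable m h \<Longrightarrow> replica_observable m (\<lambda>\<sigma>. g \<sigma> + h \<sigma>)"
proof (rule replica_observable_binop[where op="(+)"], assumption, assumption, measurable)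
  fix C D :: real
  show "\<exists>E. \<forall>x y. \<bar>x\<bar> \<le> C \<longrightarrow> \<bar>y\<bar> \<le> D \<longrightarrow> \<bar>x + y\<bar> \<le> E"
    by (rule exI[of _ "\<bar>C\<bar> + \<bar>D\<bar>"]) auto
qed

lemma replica_observable_diff:
  "replica_observable m g \<Longrightarrow> replica_observable m h \<Longrightarrow> replica_observable m (\<lambda>\<sigma>. g \<sigma> - h \<sigma>)"
proof (rule replica_observable_binop[where op="(-)"], assumption, assumption, measurable)
  fix C D :: real
  show "\<exists>E. \<forall>x y. \<bar>x\<bar> \<le> C \<longrightarrow> \<bar>y\<bar> \<le> D \<longrightarrow> \<bar>x - y\<bar> \<le> E"
    by (rule exI[of _ "\<bar>C\<bar> + \<bar>D\<bar>"]) auto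
qed

lemma replica_observable_mult:
  "replica_observable m g \<Longrightarrow> replica_observable m h \<Longrightarrow> replica_observable m (\<lambda>\<sigma>. g \<sigma> * h \<sigma>)"
proof (rule replica_observable_binop[where op="(*)"], assumption, assumption, measurable)
  fix C D :: real
  show "\<exists>E. \<forall>x y. \<bar>x\<bar> \<le> C \<longrightarrow> \<bar>y\<bar> \<le> D \<longrightarrow> \<bar>x * y\<bar> \<le> E"
    by (rule exI[of _ "\<bar>C\<bar> * \<bar>D\<bar>"]) (auto simp: abs_mult intro!: mult_mono)
qed

lemma replica_observable_sum:
  "finite S \<Longrightarrow> (\<And>i. i \<in> S \<Longrightarrow> replica_observable m (g i)) \<Longrightarrow> replica_observable m (\<lambda>\<sigma>. \<Sum>i\<in>S. g i \<sigma>)"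
  by (induction S rule: finite_induct) (auto intro: replica_observable_add replica_observable_const)

lemma replica_observable_prod:
  "finite S \<Longrightarrow> (\<And>i. i \<in> S \<Longrightarrow> replica_observable m (g i)) \<Longrightarrow> replica_observable m (\<lambda>\<sigma>. \<Prod>i\<in>S. g i \<sigma>)"
  by (induction S rule: finite_induct) (auto intro: replica_observable_mult replica_observable_const)

lemma borel_measurable_ball_space_id: "(\<lambda>x. x) \<in> (ball_space :: 'h::real_normed_vector measure) \<rightarrow>\<^sub>M borel"
  unfolding ball_space_def by (rule measurable_restrict_space1) simp

lemma replica_observable_overlap:
  fixes h :: "real \<Rightarrow> real"
  assumes "i < m" "k < m" "h \<in> borel_measurable borel" "\<And>x. \<bar>h x\<bar> \<le> C"
  shows "replica_observable m (\<lambda>\<sigma>. h (inner (\<sigma> i) (\<sigma> k :: 'h::{real_inner, second_countable_topology})))"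
proof -
  have "(\<lambda>\<sigma>. \<sigma> j) \<in> borel_measurable (PiM {..<m} (\<lambda>_. ball_space :: 'h measure))" if "j < m" for j
  proof -
    have "(\<lambda>\<sigma>. \<sigma> j) \<in> PiM {..<m} (\<lambda>_. ball_space :: 'h measure) \<rightarrow>\<^sub>M ball_space"
      using that by (intro measurable_component_singleton) simp
    from measurable_compose[OF this borel_measurable_ball_space_id] show ?thesis .
  qed
  then show ?thesis
    unfolding replica_observable_def using assms
    by (auto intro!: measurable_compose[OF borel_measurable_inner])
qed

lemma integrable_replica_observable:
  assumes M: "prob_space M" "sets M = sets ball_space" and g: "replica_observable m g"
  shows "integrable (PiM {..<m} (\<lambda>_. M)) g"
proof -
  interpret prob_space "PiM {..<m} (\<lambda>_. M)" using M by (auto intro!: prob_space_PiM)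
  obtain C where "\<And>\<sigma>. \<bar>g \<sigma>\<bar> \<le> C" using g unfolding replica_observable_def by auto
  moreover have "g \<in> borel_measurable (PiM {..<m} (\<lambda>_. M))"
    using g M(2) unfolding replica_observable_def
    by (subst measurable_cong_sets[OF sets_PiM_cong[OF refl] refl]) auto
  ultimately show ?thesis by (intro integrable_const_bound[where B=C]) auto
qed

lemma measurable_gibbs_avg:
  assumes "\<mu> \<in> P \<rightarrow>\<^sub>M prob_algebra ball_space" and "replica_observable m g"
  shows "(\<lambda>\<omega>. gibbs_avg (\<mu> \<omega>) m g) \<in> borel_measurable P"
  using assms unfolding gibbs_avg_def replica_observable_def
  by (intro measurable_compose[OF measurable_prob_algebraD[OF measurable_prob_algebra_PiM]
        integral_measurable_subprob_algebra]) auto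

lemma abs_gibbs_avg_le:
  assumes M: "prob_space M" "sets M = sets ball_space"
    and g: "replica_observable m g" and C: "\<And>\<sigma>. \<bar>g \<sigma>\<bar> \<le> C"
  shows "\<bar>gibbs_avg M m g\<bar> \<le> C"
proof -
  interpret prob_space "PiM {..<m} (\<lambda>_. M)" using M by (auto intro!: prob_space_PiM)
  have "\<bar>gibbs_avg M m g\<bar> \<le> (\<integral>\<sigma>. \<bar>g \<sigma>\<bar> \<partial>(PiM {..<m} (\<lambda>_. M)))"
    unfolding gibbs_avg_def by (rule integral_abs_bound)
  also have "\<dots> \<le> (\<integral>\<sigma>. C \<partial>(PiM {..<m} (\<lambda>_. M)))"
    using integrable_replica_observable[OF M g] C by (intro integral_mono) auto
  finally show ?thesis by (simp add: prob_space)
qed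

lemma integrable_gibbs_avg:
  assumes "prob_space P" and \<mu>: "\<mu> \<in> P \<rightarrow>\<^sub>M prob_algebra ball_space" and g: "replica_observable m g"
  shows "integrable P (\<lambda>\<omega>. gibbs_avg (\<mu> \<omega>) m g)"
proof -
  interpret prob_space P by fact
  obtain C where "\<And>\<sigma>. \<bar>g \<sigma>\<bar> \<le> C" using g unfolding replica_observable_def by auto
  then show ?thesis
    using abs_gibbs_avg_le[OF random_ball_measureD(1,2)[OF \<mu>] g] measurable_gibbs_avg[OF \<mu> g]
    by (intro integrable_const_bound[where B=C]) auto
qed

lemma Eavg_add:
  assumes P: "prob_space P" and \<mu>: "\<mu> \<in> P \<rightarrow>\<^sub>M prob_algebra ball_space"
    and g: "replica_observable m g" and h: "replica_observable m h"
  shows "Eavg P \<mu> m (\<lambda>\<sigma>. g \<sigma> + h \<sigma>) = Eavg P \<mu> m g + Eavg P \<mu> m h"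
proof -
  have "Eavg P \<mu> m (\<lambda>\<sigma>. g \<sigma> + h \<sigma>) = (\<integral>\<omega>. gibbs_avg (\<mu> \<omega>) m g + gibbs_avg (\<mu> \<omega>) m h \<partial>P)"
    unfolding Eavg_def gibbs_avg_def
    using integrable_replica_observable[OF random_ball_measureD(1,2)[OF \<mu>]] g h
    by (intro Bochner_Integration.integral_cong) auto
  then show ?thesis
    unfolding Eavg_def using integrable_gibbs_avg[OF P \<mu>] g h by simp
qed

lemma Eavg_diff:
  assumes P: "prob_space P" and \<mu>: "\<mu> \<in> P \<rightarrow>\<^sub>M prob_algebra ball_space"
    and g: "replica_observable m g" and h: "replica_observable m h"
  shows "Eavg P \<mu> m (\<lambda>\<sigma>. g \<sigma> - h \<sigma>) = Eavg P \<mu> m g - Eavg P \<mu> m h"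
proof -
  have "Eavg P \<mu> m (\<lambda>\<sigma>. g \<sigma> - h \<sigma>) = (\<integral>\<omega>. gibbs_avg (\<mu> \<omega>) m g - gibbs_avg (\<mu> \<omega>) m h \<partial>P)"
    unfolding Eavg_def gibbs_avg_def
    using integrable_replica_observable[OF random_ball_measureD(1,2)[OF \<mu>]] g h
    by (intro Bochner_Integration.integral_cong) auto
  then show ?thesis
    unfolding Eavg_def using integrable_gibbs_avg[OF P \<mu>] g h by simp
qed

lemma Eavg_sum:
  assumes P: "prob_space P" and \<mu>: "\<mu> \<in> P \<rightarrow>\<^sub>M prob_algebra ball_space"
    and "finite S" and "\<And>i. i \<in> S \<Longrightarrow> replica_observable m (g i)"
  shows "Eavg P \<mu> m (\<lambda>\<sigma>. \<Sum>i\<in>S. g i \<sigma>) = (\<Sum>i\<in>S. Eavg P \<mu> m (g i))"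
  using assms(3,4)
proof (induction S rule: finite_induct)
  case empty
  show ?case by (simp add: Eavg_def gibbs_avg_def)
next
  case (insert x F)
  then show ?case by (simp add: Eavg_add[OF P \<mu>] replica_observable_sum)
qed

lemma Eavg_const:
  assumes P: "prob_space P" and \<mu>: "\<mu> \<in> P \<rightarrow>\<^sub>M prob_algebra ball_space"
  shows "Eavg P \<mu> m (\<lambda>_. c) = c"
proof -
  have "gibbs_avg (\<mu> \<omega>) m (\<lambda>_. c) = c" if "\<omega> \<in> space P" for \<omega>
  proof -
    interpret prob_space "PiM {..<m} (\<lambda>_. \<mu> \<omega>)"
      using random_ball_measureD[OF \<mu> that] by (auto intro!: prob_space_PiM)
    show ?thesis unfolding gibbs_avg_def by (simp add: prob_space)
  qed
  then show ?thesis
    unfolding Eavg_def using prob_space.prob_space[OF P] by (simp cong: Bochner_Integration.integral_cong)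
qed

lemma Eavg_mono:
  assumes P: "prob_space P" and \<mu>: "\<mu> \<in> P \<rightarrow>\<^sub>M prob_algebra ball_space"
    and g: "replica_observable m g" and h: "replica_observable m h"
    and le: "\<And>\<sigma>. (\<And>i. i < m \<Longrightarrow> norm (\<sigma> i) \<le> 1) \<Longrightarrow> g \<sigma> \<le> h \<sigma>"
  shows "Eavg P \<mu> m g \<le> Eavg P \<mu> m h"
  unfolding Eavg_def
proof (intro integral_mono integrable_gibbs_avg[OF P \<mu> g] integrable_gibbs_avg[OF P \<mu> h])
  fix \<omega> assume \<omega>: "\<omega> \<in> space P"
  show "gibbs_avg (\<mu> \<omega>) m g \<le> gibbs_avg (\<mu> \<omega>) m h"
    unfolding gibbs_avg_def
    using random_ball_measureD[OF \<mu> \<omega>]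
    by (intro integral_mono integrable_replica_observable g h le) (auto simp: space_PiM)
qed

lemma Eavg_nonneg:
  assumes P: "prob_space P" and \<mu>: "\<mu> \<in> P \<rightarrow>\<^sub>M prob_algebra ball_space"
    and g: "replica_observable m g" and nonneg: "\<And>\<sigma>. 0 \<le> g \<sigma>"
  shows "0 \<le> Eavg P \<mu> m g"
  using Eavg_mono[OF P \<mu> replica_observable_const g, of 0] nonneg by (simp add: Eavg_const[OF P \<mu>])

lemma Eavg_permute_replicas:
  fixes \<mu> :: "'w \<Rightarrow> 'h::real_normed_vector measure"
  assumes \<mu>: "\<mu> \<in> P \<rightarrow>\<^sub>M prob_algebra ball_space" and g: "replica_observable m g"
    and \<pi>: "\<pi> \<in> {..<m} \<rightarrow> {..<m}" "inj_on \<pi> {..<m}"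
  shows "Eavg P \<mu> m (\<lambda>\<sigma>. g (\<lambda>i\<in>{..<m}. \<sigma> (\<pi> i))) = Eavg P \<mu> m g"
  unfolding Eavg_def
proof (intro Bochner_Integration.integral_cong refl)
  fix \<omega> assume \<omega>: "\<omega> \<in> space P"
  let ?M = "PiM {..<m} (\<lambda>_. \<mu> \<omega>)"
  have T: "(\<lambda>\<sigma>. \<lambda>i\<in>{..<m}. \<sigma> (\<pi> i)) \<in> ?M \<rightarrow>\<^sub>M ?M"
    using \<pi> by (intro measurable_restrict) (auto intro!: measurable_component_singleton)
  have "g \<in> borel_measurable ?M"
    using g random_ball_measureD(2)[OF \<mu> \<omega>] unfolding replica_observable_def
    by (subst measurable_cong_sets[OF sets_PiM_cong[OF refl] refl]) auto
  moreover have "distr ?M ?M (\<lambda>\<sigma>. \<lambda>i\<in>{..<m}. \<sigma> (\<pi> i)) = ?M"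
    using distr_PiM_reindex[of "{..<m}" "\<lambda>_. \<mu> \<omega>" \<pi> "{..<m}"] \<pi> random_ball_measureD(1)[OF \<mu> \<omega>]
    by simp
  ultimately show "gibbs_avg (\<mu> \<omega>) m (\<lambda>\<sigma>. g (\<lambda>i\<in>{..<m}. \<sigma> (\<pi> i))) = gibbs_avg (\<mu> \<omega>) m g"
    unfolding gibbs_avg_def using integral_distr[OF T, of g] by simp
qed

lemma gibbs_avg_restrict_replicas:
  assumes M: "prob_space M" and m: "m \<le> n" and g: "g \<in> borel_measurable (PiM {..<m} (\<lambda>_. M))"
  shows "gibbs_avg M n (\<lambda>\<sigma>. g (restrict \<sigma> {..<m})) = gibbs_avg M m g"
proof -
  interpret product_prob_space "\<lambda>_::nat. M" "{..<n}"
    using M by (simp add: product_prob_space_def product_sigma_finite_def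
        product_prob_space_axioms_def prob_space_imp_sigma_finite)
  have "distr (PiM {..<n} (\<lambda>_. M)) (PiM {..<m} (\<lambda>_. M)) (\<lambda>\<sigma>. restrict \<sigma> {..<m}) = PiM {..<m} (\<lambda>_. M)"
    using m by (intro distr_PiM_restrict_finite) auto
  with m show ?thesis
    unfolding gibbs_avg_def using integral_distr[OF measurable_restrict_subset g, of "{..<n}"] by simp
qed

lemma Eavg_restrict_replicas:
  assumes \<mu>: "\<mu> \<in> P \<rightarrow>\<^sub>M prob_algebra ball_space" and m: "m \<le> n" and g: "replica_observable m g"
  shows "Eavg P \<mu> n (\<lambda>\<sigma>. g (restrict \<sigma> {..<m})) = Eavg P \<mu> m g"
  unfolding Eavg_def
proof (intro Bochner_Integration.integral_cong refl gibbs_avg_restrict_replicas m)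
  fix \<omega> assume \<omega>: "\<omega> \<in> space P"
  show "prob_space (\<mu> \<omega>)" using random_ball_measureD(1)[OF \<mu> \<omega>] .
  show "g \<in> borel_measurable (PiM {..<m} (\<lambda>_. \<mu> \<omega>))"
    using g random_ball_measureD(2)[OF \<mu> \<omega>] unfolding replica_observable_def
    by (subst measurable_cong_sets[OF sets_PiM_cong[OF refl] refl]) auto
qed

lemma pair_measure_eq_distr_PiM:
  assumes M: "prob_space M"
  shows "M \<Otimes>\<^sub>M M = distr (PiM {..<2} (\<lambda>_. M)) (M \<Otimes>\<^sub>M M) (\<lambda>\<sigma>. (\<sigma> 0, \<sigma> (1::nat)))"
proof (rule pair_measure_eqI)
  interpret prob_space M by fact
  interpret product_sigma_finite "\<lambda>_::nat. M" by unfold_locales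
  show "sigma_finite_measure M" by unfold_locales
  then show "sigma_finite_measure M" .
  show "sets (M \<Otimes>\<^sub>M M) = sets (distr (PiM {..<2} (\<lambda>_. M)) (M \<Otimes>\<^sub>M M) (\<lambda>\<sigma>. (\<sigma> 0, \<sigma> (1::nat))))"
    by simp
  fix A B assume A: "A \<in> sets M" and B: "B \<in> sets M"
  have T: "(\<lambda>\<sigma>. (\<sigma> 0, \<sigma> (1::nat))) \<in> PiM {..<2} (\<lambda>_. M) \<rightarrow>\<^sub>M M \<Otimes>\<^sub>M M"
    by (intro measurable_Pair measurable_component_singleton) auto
  have two: "{..<2::nat} = {0, 1}" by auto
  have preimage: "(\<lambda>\<sigma>. (\<sigma> 0, \<sigma> (1::nat))) -` (A \<times> B) \<inter> space (PiM {..<2} (\<lambda>_. M))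
      = (\<Pi>\<^sub>E i\<in>{..<2}. if i = 0 then A else B)"
  proof (rule set_eqI)
    show "\<sigma> \<in> (\<lambda>\<sigma>. (\<sigma> 0, \<sigma> (1::nat))) -` (A \<times> B) \<inter> space (PiM {..<2} (\<lambda>_. M))
        \<longleftrightarrow> \<sigma> \<in> (\<Pi>\<^sub>E i\<in>{..<2}. if i = 0 then A else B)" for \<sigma>
      using sets.sets_into_space[OF A] sets.sets_into_space[OF B]
      unfolding space_PiM two by (simp add: PiE_iff) blast
  qed
  have "A \<times> B \<in> sets (M \<Otimes>\<^sub>M M)" using A B by simp
  then have "emeasure (distr (PiM {..<2} (\<lambda>_. M)) (M \<Otimes>\<^sub>M M) (\<lambda>\<sigma>. (\<sigma> 0, \<sigma> (1::nat)))) (A \<times> B)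
      = emeasure (PiM {..<2::nat} (\<lambda>_. M)) (\<Pi>\<^sub>E i\<in>{..<2}. if i = 0 then A else B)"
    by (simp only: emeasure_distr[OF T] preimage)
  also have "\<dots> = (\<Prod>i\<in>{..<2::nat}. emeasure M (if i = 0 then A else B))"
    using A B by (intro emeasure_PiM) auto
  also have "\<dots> = emeasure M A * emeasure M B" unfolding two by simp
  finally show "emeasure M A * emeasure M B
      = emeasure (distr (PiM {..<2} (\<lambda>_. M)) (M \<Otimes>\<^sub>M M) (\<lambda>\<sigma>. (\<sigma> 0, \<sigma> (1::nat)))) (A \<times> B)"
    by simp
qed

lemma measure_overlap_less_le_gibbs_avg:
  fixes M :: "'h::{real_inner, second_countable_topology} measure"
  assumes M: "prob_space M" "sets M = sets ball_space"
    and h: "h \<in> borel_measurable borel" "\<And>x. 0 \<le> h x" "\<And>x. h x \<le> 1" "\<And>x. x < - e \<Longrightarrow> h x = 1"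
  shows "measure (M \<Otimes>\<^sub>M M) {z \<in> space (M \<Otimes>\<^sub>M M). inner (fst z) (snd z) < - e}
         \<le> gibbs_avg M 2 (\<lambda>\<sigma>. h (inner (\<sigma> 0) (\<sigma> 1)))"
proof -
  interpret MM: prob_space "M \<Otimes>\<^sub>M M" using M by (intro prob_space_pair)
  have id: "(\<lambda>x. x) \<in> M \<rightarrow>\<^sub>M borel"
    unfolding measurable_cong_sets[OF M(2) refl] by (rule borel_measurable_ball_space_id)
  have overlap: "(\<lambda>z. inner (fst z) (snd z)) \<in> borel_measurable (M \<Otimes>\<^sub>M M)"
    by (intro borel_measurable_inner measurable_compose[OF measurable_fst id] measurable_compose[OF measurable_snd id])
  let ?S = "{z \<in> space (M \<Otimes>\<^sub>M M). inner (fst z) (snd z) < - e}"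
  have S: "?S \<in> sets (M \<Otimes>\<^sub>M M)" using overlap by measurable
  have "measure (M \<Otimes>\<^sub>M M) ?S = (\<integral>z. indicator ?S z \<partial>(M \<Otimes>\<^sub>M M))"
    using S by simp
  also have "\<dots> \<le> (\<integral>z. h (inner (fst z) (snd z)) \<partial>(M \<Otimes>\<^sub>M M))"
  proof (rule integral_mono)
    show "integrable (M \<Otimes>\<^sub>M M) (\<lambda>z. h (inner (fst z) (snd z)))"
      using h by (intro MM.integrable_const_bound[where B=1] measurable_compose[OF overlap h(1)]) auto
    show "integrable (M \<Otimes>\<^sub>M M) (indicator ?S :: _ \<Rightarrow> real)"
      using S by (intro MM.integrable_const_bound[where B=1] borel_measurable_indicator) (auto simp: indicator_def)
    show "indicator ?S z \<le> h (inner (fst z) (snd z))" for z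
      using h(2,4) by (auto simp: indicator_def)
  qed
  also have "\<dots> = (\<integral>z. h (inner (fst z) (snd z))
      \<partial>distr (PiM {..<2} (\<lambda>_. M)) (M \<Otimes>\<^sub>M M) (\<lambda>\<sigma>. (\<sigma> 0, \<sigma> (1::nat))))"
    using pair_measure_eq_distr_PiM[OF M(1)] by simp
  also have "\<dots> = gibbs_avg M 2 (\<lambda>\<sigma>. h (inner (\<sigma> 0) (\<sigma> 1)))"
    unfolding gibbs_avg_def
    by (subst integral_distr) (auto intro!: measurable_Pair measurable_component_singleton measurable_compose[OF overlap h(1)])
  finally show ?thesis .
qed

lemma prob_overlap_mass_gt_le:
  fixes \<mu> :: "'w \<Rightarrow> 'h::{real_inner, second_countable_topology} measure"
  assumes P: "prob_space P" and \<mu>: "\<mu> \<in> P \<rightarrow>\<^sub>M prob_algebra ball_space" and t: "t > 0"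
    and h: "h \<in> borel_measurable borel" "\<And>x. 0 \<le> h x" "\<And>x. h x \<le> 1" "\<And>x. x < - e \<Longrightarrow> h x = 1"
  shows "prob_space.prob P {\<omega> \<in> space P.
           measure (\<mu> \<omega> \<Otimes>\<^sub>M \<mu> \<omega>) {z \<in> space (\<mu> \<omega> \<Otimes>\<^sub>M \<mu> \<omega>). inner (fst z) (snd z) < - e} > t}
         \<le> Eavg P \<mu> 2 (\<lambda>\<sigma>. h (inner (\<sigma> 0) (\<sigma> 1))) / t"
proof -
  interpret prob_space P by fact
  define G where "G \<omega> = gibbs_avg (\<mu> \<omega>) 2 (\<lambda>\<sigma>. h (inner (\<sigma> 0) (\<sigma> 1)))" for \<omega>
  have obs: "replica_observable 2 (\<lambda>\<sigma>. h (inner (\<sigma> 0) (\<sigma> (1::nat) :: 'h)))"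
    using h by (intro replica_observable_overlap[where C=1]) auto
  let ?A = "{\<omega> \<in> space P.
    measure (\<mu> \<omega> \<Otimes>\<^sub>M \<mu> \<omega>) {z \<in> space (\<mu> \<omega> \<Otimes>\<^sub>M \<mu> \<omega>). inner (fst z) (snd z) < - e} > t}"
  let ?B = "{\<omega> \<in> space P. G \<omega> \<ge> t}"
  have B: "?B \<in> events"
    using measurable_gibbs_avg[OF \<mu> obs] unfolding G_def[abs_def] by measurable
  have "?A \<subseteq> ?B"
    using measure_overlap_less_le_gibbs_avg[OF random_ball_measureD(1,2)[OF \<mu>] h]
    unfolding G_def by fastforce
  \<comment> \<open>?A need not be an event, in which case its probability is 0.\<close>
  then have "prob ?A \<le> prob ?B"
    using B by (cases "?A \<in> events") (auto intro: finite_measure_mono simp: measure_notin_sets)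
  also have "\<dots> \<le> (\<integral>\<omega>. G \<omega> \<partial>P) / t"
    using B t unfolding G_def
    by (intro integral_Markov_inequality_measure[OF integrable_gibbs_avg[OF P \<mu> obs]])
      (auto simp: gibbs_avg_def h(2) intro!: Bochner_Integration.integral_nonneg)
  finally show ?thesis unfolding G_def Eavg_def .
qed

section \<open>Cutoff products of overlaps\<close>

definition cutoff :: "real \<Rightarrow> real \<Rightarrow> nat \<Rightarrow> real \<Rightarrow> real" where
  "cutoff e d j x = min 1 (max 0 ((- e + (real j - 1) * d - x) / d))"

definition off_diag :: "nat \<Rightarrow> (nat \<times> nat) set" where
  "off_diag m = {p \<in> {..<m} \<times> {..<m}. fst p \<noteq> snd p}"

definition cutoff_prod_mat :: "real \<Rightarrow> real \<Rightarrow> nat \<Rightarrow> nat \<Rightarrow> (nat \<times> nat \<Rightarrow> real) \<Rightarrow> real" where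
  "cutoff_prod_mat e d m j x = (\<Prod>p\<in>off_diag m. cutoff e d j (x p))"

definition cutoff_prod :: "real \<Rightarrow> real \<Rightarrow> nat \<Rightarrow> nat \<Rightarrow> (nat \<Rightarrow> 'h::real_inner) \<Rightarrow> real" where
  "cutoff_prod e d m j \<sigma> = cutoff_prod_mat e d m j (gram m \<sigma>)"

definition cutoff_defect :: "real \<Rightarrow> real \<Rightarrow> nat \<Rightarrow> real \<Rightarrow> real" where
  "cutoff_defect e d m x = 1 - (cutoff e d (Suc m) x)\<^sup>2"

lemma cutoff_nonneg: "0 \<le> cutoff e d j x"
  unfolding cutoff_def by simp

lemma cutoff_le_1: "cutoff e d j x \<le> 1"
  unfolding cutoff_def by simp

lemma cutoff_mono:
  assumes "d > 0" "j \<le> k"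
  shows "cutoff e d j x \<le> cutoff e d k x"
proof -
  have "(- e + (real j - 1) * d - x) / d \<le> (- e + (real k - 1) * d - x) / d"
    using assms by (intro divide_right_mono) (auto intro!: mult_right_mono)
  then show ?thesis unfolding cutoff_def by linarith
qed

lemma cutoff_pos_imp_less:
  assumes "d > 0" "cutoff e d j x > 0"
  shows "x < - e + (real j - 1) * d"
proof (rule ccontr)
  assume "\<not> ?thesis"
  then have "(- e + (real j - 1) * d - x) / d \<le> 0" using assms(1) by (simp add: divide_nonpos_pos)
  then show False using assms(2) unfolding cutoff_def by linarith
qed

lemma cutoff_Suc_eq_1:
  assumes "d > 0" "cutoff e d j x > 0"
  shows "cutoff e d (Suc j) x = 1"
proof -
  have "1 \<le> (- e + (real (Suc j) - 1) * d - x) / d"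
    using cutoff_pos_imp_less[OF assms] assms(1) by (simp add: field_simps)
  then show ?thesis unfolding cutoff_def by linarith
qed

lemma cutoff_2_eq_1:
  assumes "d > 0" "x < - e"
  shows "cutoff e d 2 x = 1"
proof -
  have "1 \<le> (- e + (real 2 - 1) * d - x) / d" using assms by (simp add: field_simps)
  then show ?thesis unfolding cutoff_def by simp
qed

lemma continuous_on_cutoff: "continuous_on S (cutoff e d j)"
  unfolding cutoff_def divide_inverse by (intro continuous_intros)

lemma borel_measurable_cutoff[measurable]: "cutoff e d j \<in> borel_measurable borel"
  using continuous_on_cutoff[of UNIV] by (rule borel_measurable_continuous_onI)

lemma cutoff_defect_bounds: "0 \<le> cutoff_defect e d m x" "cutoff_defect e d m x \<le> 1"
  unfolding cutoff_defect_def using cutoff_nonneg[of e d "Suc m" x] cutoff_le_1[of e d "Suc m" x]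
  by (auto simp: power_le_one)

lemma continuous_on_cutoff_defect: "continuous_on S (cutoff_defect e d m)"
  unfolding cutoff_defect_def[abs_def] by (intro continuous_intros continuous_on_cutoff)

lemma borel_measurable_cutoff_defect[measurable]: "cutoff_defect e d m \<in> borel_measurable borel"
  using continuous_on_cutoff_defect[of UNIV] by (rule borel_measurable_continuous_onI)

lemma finite_off_diag[simp]: "finite (off_diag m)"
  unfolding off_diag_def by (rule finite_subset[of _ "{..<m} \<times> {..<m}"]) auto

lemma borel_measurable_cutoff_prod_mat:
  "cutoff_prod_mat e d m j \<in> borel_measurable (PiM ({..<m} \<times> {..<m}) (\<lambda>_. borel))"
  unfolding cutoff_prod_mat_def[abs_def]
proof (rule borel_measurable_prod)
  fix p assume "p \<in> off_diag m"
  then have "(\<lambda>x. x p) \<in> PiM ({..<m} \<times> {..<m}) (\<lambda>_. borel) \<rightarrow>\<^sub>M (borel :: real measure)"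
    unfolding off_diag_def by (intro measurable_component_singleton) auto
  from measurable_compose[OF this borel_measurable_cutoff]
  show "(\<lambda>x. cutoff e d j (x p)) \<in> borel_measurable (PiM ({..<m} \<times> {..<m}) (\<lambda>_. borel))" .
qed

lemma abs_cutoff_prod_mat_le_1: "\<bar>cutoff_prod_mat e d m j x\<bar> \<le> 1"
  unfolding cutoff_prod_mat_def
  by (auto simp: abs_le_iff cutoff_nonneg cutoff_le_1 intro!: prod_le_1 order_trans[OF _ prod_nonneg])

lemma cutoff_prod_eq:
  "cutoff_prod e d m j \<sigma> = (\<Prod>p\<in>off_diag m. cutoff e d j (inner (\<sigma> (fst p)) (\<sigma> (snd p))))"
  unfolding cutoff_prod_def cutoff_prod_mat_def gram_def off_diag_def
  by (intro prod.cong refl) (auto simp: case_prod_beta)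

lemma cutoff_prod_nonneg: "0 \<le> cutoff_prod e d m j \<sigma>"
  unfolding cutoff_prod_eq by (intro prod_nonneg) (auto simp: cutoff_nonneg)

lemma cutoff_prod_restrict: "cutoff_prod e d m j (restrict \<sigma> {..<m}) = cutoff_prod e d m j \<sigma>"
  unfolding cutoff_prod_eq off_diag_def by (intro prod.cong refl) auto

lemma cutoff_prod_permute:
  assumes \<pi>: "bij_betw \<pi> {..<m} {..<m}" and \<tau>: "\<And>i. i < m \<Longrightarrow> \<tau> i = \<sigma> (\<pi> i)"
  shows "cutoff_prod e d m j \<tau> = cutoff_prod e d m j \<sigma>"
proof -
  have im: "\<pi> ` {..<m} = {..<m}" using \<pi> by (rule bij_betw_imp_surj_on)
  have "map_prod \<pi> \<pi> ` off_diag m = off_diag m"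
  proof
    show "map_prod \<pi> \<pi> ` off_diag m \<subseteq> off_diag m"
      using bij_betw_imp_inj_on[OF \<pi>] im unfolding off_diag_def inj_on_def by auto
    show "off_diag m \<subseteq> map_prod \<pi> \<pi> ` off_diag m"
    proof clarify
      fix i k assume ik: "(i, k) \<in> off_diag m"
      then have "i \<in> \<pi> ` {..<m}" "k \<in> \<pi> ` {..<m}" unfolding im off_diag_def by auto
      then obtain a b where "a < m" "b < m" "i = \<pi> a" "k = \<pi> b" by auto
      with ik show "(i, k) \<in> map_prod \<pi> \<pi> ` off_diag m"
        unfolding off_diag_def by (auto intro!: image_eqI[of _ _ "(a, b)"])
    qed
  qed
  then have "bij_betw (map_prod \<pi> \<pi>) (off_diag m) (off_diag m)"
    by (intro bij_betw_subset[OF bij_betw_map_prod[OF \<pi> \<pi>]]) (auto simp: off_diag_def)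
  from prod.reindex_bij_betw[OF this, of "\<lambda>p. cutoff e d j (inner (\<sigma> (fst p)) (\<sigma> (snd p)))"]
  have "(\<Prod>p\<in>off_diag m. cutoff e d j (inner (\<sigma> (\<pi> (fst p))) (\<sigma> (\<pi> (snd p))))) = cutoff_prod e d m j \<sigma>"
    by (simp add: cutoff_prod_eq)
  moreover have "cutoff_prod e d m j \<tau>
      = (\<Prod>p\<in>off_diag m. cutoff e d j (inner (\<sigma> (\<pi> (fst p))) (\<sigma> (\<pi> (snd p)))))"
    unfolding cutoff_prod_eq using \<tau> by (intro prod.cong) (auto simp: off_diag_def)
  ultimately show ?thesis by simp
qed

lemma off_diag_Suc:
  "off_diag (Suc m) = off_diag m \<union> ((\<lambda>l. (l, m)) ` {..<m} \<union> (\<lambda>l. (m, l)) ` {..<m})"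
  unfolding off_diag_def by (auto simp: less_Suc_eq)

lemma cutoff_prod_Suc:
  "cutoff_prod e d (Suc m) j \<sigma> = cutoff_prod e d m j \<sigma> * (\<Prod>l<m. (cutoff e d j (inner (\<sigma> l) (\<sigma> m)))\<^sup>2)"
proof -
  let ?f = "\<lambda>p. cutoff e d j (inner (\<sigma> (fst p)) (\<sigma> (snd p)))"
  have "cutoff_prod e d (Suc m) j \<sigma>
      = cutoff_prod e d m j \<sigma> * (prod ?f ((\<lambda>l. (l, m)) ` {..<m}) * prod ?f ((\<lambda>l. (m, l)) ` {..<m}))"
  proof -
    have "off_diag m \<inter> ((\<lambda>l. (l, m)) ` {..<m} \<union> (\<lambda>l. (m, l)) ` {..<m}) = {}"
      unfolding off_diag_def by auto
    moreover have "(\<lambda>l. (l, m)) ` {..<m} \<inter> (\<lambda>l. (m, l)) ` {..<m} = {}" by auto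
    ultimately show ?thesis
      unfolding cutoff_prod_eq off_diag_Suc by (simp add: prod.union_disjoint)
  qed
  also have "prod ?f ((\<lambda>l. (l, m)) ` {..<m}) = (\<Prod>l<m. cutoff e d j (inner (\<sigma> l) (\<sigma> m)))"
    by (subst prod.reindex) (auto simp: inj_on_def)
  also have "prod ?f ((\<lambda>l. (m, l)) ` {..<m}) = (\<Prod>l<m. cutoff e d j (inner (\<sigma> l) (\<sigma> m)))"
    by (subst prod.reindex) (auto simp: inj_on_def inner_commute)
  finally show ?thesis by (simp add: power2_eq_square prod.distrib)
qed

lemma one_minus_sum_le_prod:
  fixes a :: "'a \<Rightarrow> real"
  assumes "finite L" "\<And>l. l \<in> L \<Longrightarrow> 0 \<le> a l \<and> a l \<le> 1"
  shows "1 - (\<Sum>l\<in>L. 1 - a l) \<le> (\<Prod>l\<in>L. a l)"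
  using assms
proof (induction L rule: finite_induct)
  case (insert x F)
  then have IH: "1 - (\<Sum>l\<in>F. 1 - a l) \<le> (\<Prod>l\<in>F. a l)" and "0 \<le> a x" "a x \<le> 1"
    and "0 \<le> (\<Prod>l\<in>F. a l)" "(\<Prod>l\<in>F. a l) \<le> 1" by (auto intro!: prod_nonneg prod_le_1)
  then have "(1 - a x) * (1 - (\<Prod>l\<in>F. a l)) \<ge> 0" by simp
  with IH insert(1,2) show ?case by (simp add: algebra_simps)
qed simp

lemma cutoff_prod_Suc_ge:
  assumes d: "d > 0"
  shows "cutoff_prod e d m m \<sigma> - (\<Sum>l<m. cutoff_prod e d m m \<sigma> * cutoff_defect e d m (inner (\<sigma> l) (\<sigma> m)))
         \<le> cutoff_prod e d (Suc m) (Suc m) \<sigma>"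
proof -
  let ?B = "cutoff_prod e d m m \<sigma>" and ?A = "cutoff_prod e d m (Suc m) \<sigma>"
  let ?C = "\<Prod>l<m. (cutoff e d (Suc m) (inner (\<sigma> l) (\<sigma> m)))\<^sup>2"
  let ?D = "1 - (\<Sum>l<m. cutoff_defect e d m (inner (\<sigma> l) (\<sigma> m)))"
  have "?B \<le> ?A" unfolding cutoff_prod_eq
    by (intro prod_mono) (auto simp: cutoff_nonneg cutoff_mono[OF d])
  moreover have "?D \<le> ?C" unfolding cutoff_defect_def
    by (rule one_minus_sum_le_prod) (auto simp: cutoff_nonneg cutoff_le_1 power_le_one)
  moreover have "0 \<le> ?B" "0 \<le> ?C" by (auto simp: cutoff_prod_nonneg intro: prod_nonneg)
  ultimately have "?B * ?D \<le> ?A * ?C"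
  proof (cases "?D \<ge> 0")
    case False
    with \<open>0 \<le> ?B\<close> have "?B * ?D \<le> 0" by (simp add: mult_nonneg_nonpos)
    also have "0 \<le> ?A * ?C" using \<open>0 \<le> ?B\<close> \<open>?B \<le> ?A\<close> \<open>0 \<le> ?C\<close> by simp
    finally show ?thesis .
  qed (auto intro: mult_mono)
  then show ?thesis by (simp add: cutoff_prod_Suc right_diff_distrib sum_distrib_left)
qed

lemma cutoff_prod_mult_cutoff_defect:
  assumes d: "d > 0" and k: "1 \<le> k" "k < m"
  shows "cutoff_prod e d m m \<sigma> * cutoff_defect e d m (inner (\<sigma> 0) (\<sigma> k)) = 0"
proof (cases "cutoff e d m (inner (\<sigma> 0) (\<sigma> k)) > 0")
  case True
  then show ?thesis using cutoff_Suc_eq_1[OF d True] by (simp add: cutoff_defect_def)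
next
  case False
  then have "cutoff e d m (inner (\<sigma> 0) (\<sigma> k)) = 0" using cutoff_nonneg[of e d m] by (meson antisym not_le)
  moreover have "(0, k) \<in> off_diag m" using k unfolding off_diag_def by auto
  ultimately have "cutoff_prod e d m m \<sigma> = 0" unfolding cutoff_prod_eq
    by (intro prod_zero) (auto intro!: bexI[of _ "(0, k)"])
  then show ?thesis by simp
qed

lemma pairwise_inner_le_imp_nonneg:
  fixes \<sigma> :: "nat \<Rightarrow> 'a::real_inner"
  assumes n: "n \<ge> 1" and norm: "\<And>i. i < n \<Longrightarrow> norm (\<sigma> i) \<le> 1"
    and inner: "\<And>i k. i < n \<Longrightarrow> k < n \<Longrightarrow> i \<noteq> k \<Longrightarrow> inner (\<sigma> i) (\<sigma> k) \<le> b"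
  shows "0 \<le> 1 + (real n - 1) * b"
proof -
  have row: "(\<Sum>k<n. inner (\<sigma> i) (\<sigma> k)) \<le> 1 + (real n - 1) * b" if i: "i < n" for i
  proof -
    have "(\<Sum>k<n. inner (\<sigma> i) (\<sigma> k)) = inner (\<sigma> i) (\<sigma> i) + (\<Sum>k\<in>{..<n} - {i}. inner (\<sigma> i) (\<sigma> k))"
      using i by (subst sum.remove[of _ i]) auto
    also have "\<dots> \<le> 1 + (\<Sum>k\<in>{..<n} - {i}. b)"
      using norm[OF i] inner[OF i] by (intro add_mono sum_mono) (auto simp: power_le_one simp flip: power2_norm_eq_inner)
    also have "\<dots> = 1 + (real n - 1) * b" using i by (simp add: card_Diff_singleton of_nat_diff)
    finally show ?thesis .
  qed
  have "0 \<le> inner (\<Sum>i<n. \<sigma> i) (\<Sum>k<n. \<sigma> k)" by simp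
  also have "\<dots> = (\<Sum>i<n. \<Sum>k<n. inner (\<sigma> i) (\<sigma> k))"
    by (simp only: inner_sum_left) (simp add: inner_sum_right)
  also have "\<dots> \<le> real n * (1 + (real n - 1) * b)"
    using sum_mono[of "{..<n}", OF row] by simp
  finally show ?thesis using n by (simp add: zero_le_mult_iff)
qed

lemma cutoff_prod_eq_0:
  fixes \<sigma> :: "nat \<Rightarrow> 'h::real_inner"
  assumes d: "d > 0" and n: "n \<ge> 1" and neg: "1 + (real n - 1) * (- e + (real n - 1) * d) < 0"
    and norm: "\<And>i. i < n \<Longrightarrow> norm (\<sigma> i) \<le> 1"
  shows "cutoff_prod e d n n \<sigma> = 0"
proof (rule ccontr)
  assume "cutoff_prod e d n n \<sigma> \<noteq> 0"
  then have "cutoff e d n (inner (\<sigma> i) (\<sigma> k)) \<noteq> 0" if "i < n" "k < n" "i \<noteq> k" for i k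
    using that unfolding cutoff_prod_eq off_diag_def by (auto simp: prod_zero_iff)
  then have "cutoff e d n (inner (\<sigma> i) (\<sigma> k)) > 0" if "i < n" "k < n" "i \<noteq> k" for i k
    using that cutoff_nonneg[of e d n "inner (\<sigma> i) (\<sigma> k)"] by fastforce
  then have "0 \<le> 1 + (real n - 1) * (- e + (real n - 1) * d)"
    using cutoff_pos_imp_less[OF d] by (intro pairwise_inner_le_imp_nonneg[OF n norm]) (auto intro: less_imp_le)
  with neg show False by simp
qed

lemma replica_observable_cutoff_prod:
  assumes "m \<le> M"
  shows "replica_observable M (cutoff_prod e d m j :: (nat \<Rightarrow> 'h::{real_inner, second_countable_topology}) \<Rightarrow> real)"
  unfolding cutoff_prod_eq[abs_def] using assms
  by (intro replica_observable_prod replica_observable_overlap[where C=1])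
    (auto simp: off_diag_def abs_le_iff cutoff_nonneg cutoff_le_1 intro: order_trans[OF _ cutoff_nonneg])

lemma replica_observable_cutoff_overlap_sq:
  "replica_observable 2 (\<lambda>\<sigma>. (cutoff e d j (inner (\<sigma> 0) (\<sigma> 1 :: 'h::{real_inner, second_countable_topology})))\<^sup>2)"
proof (rule replica_observable_overlap[where C=1])
  show "(\<lambda>x. (cutoff e d j x)\<^sup>2) \<in> borel_measurable borel" by measurable
  show "\<bar>(cutoff e d j x)\<^sup>2\<bar> \<le> 1" for x
    using cutoff_nonneg[of e d j x] cutoff_le_1[of e d j x] by (simp add: power_le_one)
qed simp_all

lemma prob_overlap_mass_gt_le_Eavg_cutoff_sq:
  fixes \<mu> :: "'w \<Rightarrow> 'h::{real_inner, second_countable_topology} measure"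
  assumes P: "prob_space P" and \<mu>: "\<mu> \<in> P \<rightarrow>\<^sub>M prob_algebra ball_space" and d: "d > 0" and t: "t > 0"
  shows "prob_space.prob P {\<omega> \<in> space P.
           measure (\<mu> \<omega> \<Otimes>\<^sub>M \<mu> \<omega>) {z \<in> space (\<mu> \<omega> \<Otimes>\<^sub>M \<mu> \<omega>). inner (fst z) (snd z) < - e} > t}
         \<le> Eavg P \<mu> 2 (\<lambda>\<sigma>. (cutoff e d 2 (inner (\<sigma> 0) (\<sigma> 1)))\<^sup>2) / t"
proof (rule prob_overlap_mass_gt_le[OF P \<mu> t, where h="\<lambda>x. (cutoff e d 2 x)\<^sup>2"])
  show "(cutoff e d 2 x)\<^sup>2 \<le> 1" "0 \<le> (cutoff e d 2 x)\<^sup>2" for x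
    using cutoff_nonneg[of e d 2 x] cutoff_le_1[of e d 2 x] by (simp_all add: power_le_one)
  show "(cutoff e d 2 x)\<^sup>2 = 1" if "x < - e" for x
    using cutoff_2_eq_1[OF d that] by simp
qed simp

section \<open>The recursive lower bound\<close>

lemma bij_betw_swap_0:
  fixes l m :: nat
  assumes "l < m"
  shows "bij_betw (\<lambda>i. if i = 0 then l else if i = l then 0 else i) {..<m} {..<m}"
  by (rule bij_betw_byWitness[where f'="\<lambda>i. if i = 0 then l else if i = l then 0 else i"])
    (use assms in auto)

lemma replica_observable_cutoff_prod_defect:
  assumes "l < Suc m"
  shows "replica_observable (Suc m)
    (\<lambda>\<sigma>. cutoff_prod e d m m \<sigma> * cutoff_defect e d m (inner (\<sigma> l) (\<sigma> m :: 'h::{real_inner, second_countable_topology})))"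
  using assms cutoff_defect_bounds
  by (intro replica_observable_mult replica_observable_cutoff_prod replica_observable_overlap[where C=1]) auto

lemma Eavg_cutoff_prod_defect_swap:
  fixes \<mu> :: "'w \<Rightarrow> 'h::{real_inner, second_countable_topology} measure"
  assumes \<mu>: "\<mu> \<in> P \<rightarrow>\<^sub>M prob_algebra ball_space" and l: "l < m"
  shows "Eavg P \<mu> (Suc m) (\<lambda>\<sigma>. cutoff_prod e d m m \<sigma> * cutoff_defect e d m (inner (\<sigma> l) (\<sigma> m)))
       = Eavg P \<mu> (Suc m) (\<lambda>\<sigma>. cutoff_prod e d m m \<sigma> * cutoff_defect e d m (inner (\<sigma> 0) (\<sigma> m)))"
proof -
  let ?g = "\<lambda>l \<sigma>. cutoff_prod e d m m \<sigma> * cutoff_defect e d m (inner (\<sigma> l) (\<sigma> m :: 'h))"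
  let ?\<pi> = "\<lambda>i. if i = 0 then l else if i = l then 0 else i"
  have "?g 0 (\<lambda>i\<in>{..<Suc m}. \<sigma> (?\<pi> i)) = ?g l \<sigma>" for \<sigma>
  proof -
    have "cutoff_prod e d m m (\<lambda>i\<in>{..<Suc m}. \<sigma> (?\<pi> i)) = cutoff_prod e d m m \<sigma>"
      using l by (intro cutoff_prod_permute[OF bij_betw_swap_0[OF l]]) auto
    then show ?thesis using l by simp
  qed
  then have "Eavg P \<mu> (Suc m) (?g l) = Eavg P \<mu> (Suc m) (\<lambda>\<sigma>. ?g 0 (\<lambda>i\<in>{..<Suc m}. \<sigma> (?\<pi> i)))"
    by simp
  also have "\<dots> = Eavg P \<mu> (Suc m) (?g 0)"
    using l by (intro Eavg_permute_replicas[OF \<mu> replica_observable_cutoff_prod_defect]) (auto simp: inj_on_def)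
  finally show ?thesis .
qed

lemma Eavg_cutoff_prod_Suc_replicas:
  fixes \<mu> :: "'w \<Rightarrow> 'h::{real_inner, second_countable_topology} measure"
  assumes \<mu>: "\<mu> \<in> P \<rightarrow>\<^sub>M prob_algebra ball_space"
  shows "Eavg P \<mu> (Suc m) (cutoff_prod e d m m :: (nat \<Rightarrow> 'h) \<Rightarrow> real) = Eavg P \<mu> m (cutoff_prod e d m m)"
proof -
  have "Eavg P \<mu> (Suc m) (\<lambda>\<sigma>. cutoff_prod e d m m (restrict \<sigma> {..<m}))
      = Eavg P \<mu> m (cutoff_prod e d m m :: (nat \<Rightarrow> 'h) \<Rightarrow> real)"
    by (rule Eavg_restrict_replicas[OF \<mu>]) (auto intro: replica_observable_cutoff_prod)
  then show ?thesis by (simp add: cutoff_prod_restrict)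
qed

lemma Eavg_cutoff_prod_Suc_ge_defect:
  fixes \<mu> :: "'w \<Rightarrow> 'h::{real_inner, second_countable_topology} measure"
  assumes P: "prob_space P" and \<mu>: "\<mu> \<in> P \<rightarrow>\<^sub>M prob_algebra ball_space" and d: "d > 0"
  shows "Eavg P \<mu> m (cutoff_prod e d m m)
           - real m * Eavg P \<mu> (Suc m) (\<lambda>\<sigma>. cutoff_prod e d m m \<sigma> * cutoff_defect e d m (inner (\<sigma> 0) (\<sigma> m)))
         \<le> Eavg P \<mu> (Suc m) (cutoff_prod e d (Suc m) (Suc m))"
proof -
  let ?F = "cutoff_prod e d m m :: (nat \<Rightarrow> 'h) \<Rightarrow> real"
  let ?g = "\<lambda>l \<sigma>. ?F \<sigma> * cutoff_defect e d m (inner (\<sigma> l) (\<sigma> m))"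
  have F: "replica_observable (Suc m) ?F" by (rule replica_observable_cutoff_prod) simp
  have sum: "replica_observable (Suc m) (\<lambda>\<sigma>. \<Sum>l<m. ?g l \<sigma>)"
    by (intro replica_observable_sum replica_observable_cutoff_prod_defect) auto
  have "(\<Sum>l<m. Eavg P \<mu> (Suc m) (?g l)) = (\<Sum>l<m. Eavg P \<mu> (Suc m) (?g 0))"
    by (intro sum.cong refl Eavg_cutoff_prod_defect_swap[OF \<mu>]) simp
  then have "Eavg P \<mu> m ?F - real m * Eavg P \<mu> (Suc m) (?g 0)
      = Eavg P \<mu> (Suc m) ?F - (\<Sum>l<m. Eavg P \<mu> (Suc m) (?g l))"
    by (simp add: Eavg_cutoff_prod_Suc_replicas[OF \<mu>])
  also have "\<dots> = Eavg P \<mu> (Suc m) ?F - Eavg P \<mu> (Suc m) (\<lambda>\<sigma>. \<Sum>l<m. ?g l \<sigma>)"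
    by (subst Eavg_sum[OF P \<mu>]) (auto intro: replica_observable_cutoff_prod_defect)
  also have "\<dots> = Eavg P \<mu> (Suc m) (\<lambda>\<sigma>. ?F \<sigma> - (\<Sum>l<m. ?g l \<sigma>))"
    by (rule Eavg_diff[symmetric, OF P \<mu> F sum])
  also have "\<dots> \<le> Eavg P \<mu> (Suc m) (cutoff_prod e d (Suc m) (Suc m))"
  proof (rule Eavg_mono[OF P \<mu> replica_observable_diff[OF F sum] replica_observable_cutoff_prod])
    show "?F \<sigma> - (\<Sum>l<m. ?g l \<sigma>) \<le> cutoff_prod e d (Suc m) (Suc m) \<sigma>" for \<sigma>
      by (rule cutoff_prod_Suc_ge[OF d])
  qed simp
  finally show ?thesis .
qed

(* The quantity that the Ghirlanda-Guerra hypothesis of the main theorem sends to 0. *)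
definition gg_error ::
  "'w measure \<Rightarrow> ('w \<Rightarrow> 'h::real_inner measure) \<Rightarrow> nat \<Rightarrow> ((nat \<times> nat \<Rightarrow> real) \<Rightarrow> real) \<Rightarrow> (real \<Rightarrow> real) \<Rightarrow> real"
where
  "gg_error P \<mu> n f \<psi> = \<bar>real n * Eavg P \<mu> (n + 1) (\<lambda>\<sigma>. f (gram n \<sigma>) * \<psi> (inner (\<sigma> 0) (\<sigma> n)))
     - Eavg P \<mu> n (\<lambda>\<sigma>. f (gram n \<sigma>)) * Eavg P \<mu> 2 (\<lambda>\<sigma>. \<psi> (inner (\<sigma> 0) (\<sigma> 1)))
     - (\<Sum>k\<in>{2..n}. Eavg P \<mu> n (\<lambda>\<sigma>. f (gram n \<sigma>) * \<psi> (inner (\<sigma> 0) (\<sigma> (k - 1)))))\<bar>"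

lemma Eavg_cutoff_defect_le:
  fixes \<mu> :: "'w \<Rightarrow> 'h::{real_inner, second_countable_topology} measure"
  assumes P: "prob_space P" and \<mu>: "\<mu> \<in> P \<rightarrow>\<^sub>M prob_algebra ball_space" and d: "d > 0"
  shows "real m * Eavg P \<mu> (Suc m) (\<lambda>\<sigma>. cutoff_prod e d m m \<sigma> * cutoff_defect e d m (inner (\<sigma> 0) (\<sigma> m)))
         \<le> Eavg P \<mu> m (cutoff_prod e d m m) * (1 - Eavg P \<mu> 2 (\<lambda>\<sigma>. (cutoff e d (Suc m) (inner (\<sigma> 0) (\<sigma> 1)))\<^sup>2))
           + gg_error P \<mu> m (cutoff_prod_mat e d m m) (cutoff_defect e d m)"
proof -
  \<comment> \<open>On the support of the cutoff product every overlap lies where cutoff e d (Suc m) is already 1.\<close>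
  have "Eavg P \<mu> m (\<lambda>\<sigma>. cutoff_prod e d m m \<sigma> * cutoff_defect e d m (inner (\<sigma> 0) (\<sigma> (k - 1)))) = 0"
    if "k \<in> {2..m}" for k
  proof -
    have "(\<lambda>\<sigma>. cutoff_prod e d m m \<sigma> * cutoff_defect e d m (inner (\<sigma> 0) (\<sigma> (k - 1)))) = (\<lambda>_. 0)"
      using that cutoff_prod_mult_cutoff_defect[OF d, of "k - 1" m e] by fastforce
    then have "Eavg P \<mu> m (\<lambda>\<sigma>. cutoff_prod e d m m \<sigma> * cutoff_defect e d m (inner (\<sigma> 0) (\<sigma> (k - 1))))
        = Eavg P \<mu> m (\<lambda>_. 0)" by (rule arg_cong)
    then show ?thesis by (simp add: Eavg_const[OF P \<mu>])
  qed
  moreover have "Eavg P \<mu> 2 (\<lambda>\<sigma>. cutoff_defect e d m (inner (\<sigma> 0) (\<sigma> 1)))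
      = 1 - Eavg P \<mu> 2 (\<lambda>\<sigma>. (cutoff e d (Suc m) (inner (\<sigma> 0) (\<sigma> 1)))\<^sup>2)"
    unfolding cutoff_defect_def
    using Eavg_diff[OF P \<mu> replica_observable_const replica_observable_cutoff_overlap_sq, of 1 e d "Suc m"]
    by (simp add: Eavg_const[OF P \<mu>])
  ultimately show ?thesis
    unfolding gg_error_def cutoff_prod_def[symmetric] by (simp add: sum.neutral abs_if)
qed

lemma Eavg_cutoff_prod_Suc_ge:
  fixes \<mu> :: "'w \<Rightarrow> 'h::{real_inner, second_countable_topology} measure"
  assumes P: "prob_space P" and \<mu>: "\<mu> \<in> P \<rightarrow>\<^sub>M prob_algebra ball_space" and d: "d > 0" and m: "m \<ge> 1"
  shows "Eavg P \<mu> m (cutoff_prod e d m m) * Eavg P \<mu> 2 (\<lambda>\<sigma>. (cutoff e d 2 (inner (\<sigma> 0) (\<sigma> 1)))\<^sup>2)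
           - gg_error P \<mu> m (cutoff_prod_mat e d m m) (cutoff_defect e d m)
         \<le> Eavg P \<mu> (Suc m) (cutoff_prod e d (Suc m) (Suc m))"
proof -
  let ?c = "Eavg P \<mu> m (cutoff_prod e d m m)"
  let ?p = "Eavg P \<mu> 2 (\<lambda>\<sigma>. (cutoff e d 2 (inner (\<sigma> 0) (\<sigma> 1)))\<^sup>2)"
  let ?q = "Eavg P \<mu> 2 (\<lambda>\<sigma>. (cutoff e d (Suc m) (inner (\<sigma> 0) (\<sigma> 1)))\<^sup>2)"
  have "?p \<le> ?q"
    using m by (intro Eavg_mono[OF P \<mu>] replica_observable_cutoff_overlap_sq power_mono cutoff_mono[OF d]
        cutoff_nonneg) auto
  moreover have "0 \<le> ?c"
    by (intro Eavg_nonneg[OF P \<mu>] replica_observable_cutoff_prod cutoff_prod_nonneg) simp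
  ultimately have "?c * ?p \<le> ?c * ?q" by (rule mult_left_mono)
  then show ?thesis
    using Eavg_cutoff_prod_Suc_ge_defect[OF P \<mu> d, where e=e and m=m] Eavg_cutoff_defect_le[OF P \<mu> d, of m e]
    by (simp add: algebra_simps)
qed

lemma Eavg_cutoff_prod_ge_power:
  fixes \<mu> :: "'w \<Rightarrow> 'h::{real_inner, second_countable_topology} measure" and e d :: real
  assumes P: "prob_space P" and \<mu>: "\<mu> \<in> P \<rightarrow>\<^sub>M prob_algebra ball_space" and d: "d > 0" and m: "m \<ge> 1"
  defines "p \<equiv> Eavg P \<mu> 2 (\<lambda>\<sigma>. (cutoff e d 2 (inner (\<sigma> 0) (\<sigma> 1)))\<^sup>2)"
  shows "p ^ (m - 1) - (\<Sum>j\<in>{1..<m}. gg_error P \<mu> j (cutoff_prod_mat e d j j) (cutoff_defect e d j))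
         \<le> Eavg P \<mu> m (cutoff_prod e d m m)"
  using m
proof (induction m rule: nat_induct_at_least)
  case base
  have "off_diag 1 = {}" unfolding off_diag_def by auto
  then show ?case by (simp add: cutoff_prod_eq Eavg_const[OF P \<mu>])
next
  case (Suc m)
  let ?S = "\<Sum>j\<in>{1..<m}. gg_error P \<mu> j (cutoff_prod_mat e d j j) (cutoff_defect e d j)"
  have p: "0 \<le> p" "p \<le> 1"
  proof -
    show "0 \<le> p"
      unfolding p_def by (intro Eavg_nonneg[OF P \<mu> replica_observable_cutoff_overlap_sq]) simp
    have "p \<le> Eavg P \<mu> 2 (\<lambda>_. 1)"
      unfolding p_def
      by (intro Eavg_mono[OF P \<mu> replica_observable_cutoff_overlap_sq replica_observable_const])
        (simp add: cutoff_nonneg cutoff_le_1 power_le_one)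
    then show "p \<le> 1" by (simp add: Eavg_const[OF P \<mu>])
  qed
  have "p ^ m = p ^ (m - 1) * p" using Suc.hyps by (cases m) auto
  moreover have "?S * p \<le> ?S" using p by (simp add: gg_error_def sum_nonneg mult_left_le)
  ultimately have "p ^ m - ?S \<le> (p ^ (m - 1) - ?S) * p" by (simp add: left_diff_distrib)
  also have "\<dots> \<le> Eavg P \<mu> m (cutoff_prod e d m m) * p"
    using Suc.IH p by (intro mult_right_mono) auto
  finally show ?case
    using Eavg_cutoff_prod_Suc_ge[OF P \<mu> d Suc.hyps, of e] Suc.hyps unfolding p_def
    by simp
qed

lemma Eavg_cutoff_sq_power_le_gg_errors:
  fixes \<mu> :: "'w \<Rightarrow> 'h::{real_inner, second_countable_topology} measure"
  assumes P: "prob_space P" and \<mu>: "\<mu> \<in> P \<rightarrow>\<^sub>M prob_algebra ball_space" and d: "d > 0" and n: "n \<ge> 1"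
    and neg: "1 + (real n - 1) * (- e + (real n - 1) * d) < 0"
  shows "Eavg P \<mu> 2 (\<lambda>\<sigma>. (cutoff e d 2 (inner (\<sigma> 0) (\<sigma> 1)))\<^sup>2) ^ (n - 1)
         \<le> (\<Sum>j\<in>{1..<n}. gg_error P \<mu> j (cutoff_prod_mat e d j j) (cutoff_defect e d j))"
proof -
  have "Eavg P \<mu> n (cutoff_prod e d n n :: (nat \<Rightarrow> 'h) \<Rightarrow> real) \<le> Eavg P \<mu> n (\<lambda>_. 0)"
  proof (rule Eavg_mono[OF P \<mu> replica_observable_cutoff_prod replica_observable_const])
    fix \<sigma> :: "nat \<Rightarrow> 'h"
    assume "\<And>i. i < n \<Longrightarrow> norm (\<sigma> i) \<le> 1"
    from cutoff_prod_eq_0[OF d n neg this] show "cutoff_prod e d n n \<sigma> \<le> 0" by simp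
  qed simp
  then show ?thesis
    using Eavg_cutoff_prod_ge_power[OF P \<mu> d n, of e] by (simp add: Eavg_const[OF P \<mu>])
qed

section \<open>Vanishing of negative overlaps\<close>

lemma tendsto_0_if_power_le:
  fixes x s :: "nat \<Rightarrow> real"
  assumes k: "k > 0" and x: "\<And>N. 0 \<le> x N" "\<And>N. x N ^ k \<le> s N" and s: "s \<longlonglongrightarrow> 0"
  shows "x \<longlonglongrightarrow> 0"
proof (rule tendsto_sandwich[of "\<lambda>_. 0" _ _ "\<lambda>N. root k (s N)"])
  have "x N \<le> root k (s N)" for N
    using real_root_le_mono[OF k x(2)] real_root_power_cancel[OF k x(1)] by simp
  then show "eventually (\<lambda>N. x N \<le> root k (s N)) sequentially" by simp
  show "(\<lambda>N. root k (s N)) \<longlonglongrightarrow> 0"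
    using tendsto_real_root[OF s, of k] by simp
qed (use x in simp_all)

lemma Eavg_cutoff_sq_tendsto_0:
  fixes \<mu> :: "nat \<Rightarrow> 'w \<Rightarrow> 'h::{real_inner, second_countable_topology} measure"
  assumes P: "prob_space P" and \<mu>: "\<And>N. \<mu> N \<in> P \<rightarrow>\<^sub>M prob_algebra ball_space"
    and d: "d > 0" and n: "n \<ge> 2" and neg: "1 + (real n - 1) * (- e + (real n - 1) * d) < 0"
    and gg: "\<And>j. 1 \<le> j \<Longrightarrow> j < n \<Longrightarrow>
      (\<lambda>N. gg_error P (\<mu> N) j (cutoff_prod_mat e d j j) (cutoff_defect e d j)) \<longlonglongrightarrow> 0"
  shows "(\<lambda>N. Eavg P (\<mu> N) 2 (\<lambda>\<sigma>. (cutoff e d 2 (inner (\<sigma> 0) (\<sigma> 1)))\<^sup>2)) \<longlonglongrightarrow> 0"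
proof (rule tendsto_0_if_power_le)
  show "0 < n - 1" using n by simp
  show "0 \<le> Eavg P (\<mu> N) 2 (\<lambda>\<sigma>. (cutoff e d 2 (inner (\<sigma> 0) (\<sigma> 1)))\<^sup>2)" for N
    by (intro Eavg_nonneg[OF P \<mu> replica_observable_cutoff_overlap_sq]) simp
  show "Eavg P (\<mu> N) 2 (\<lambda>\<sigma>. (cutoff e d 2 (inner (\<sigma> 0) (\<sigma> 1)))\<^sup>2) ^ (n - 1)
      \<le> (\<Sum>j\<in>{1..<n}. gg_error P (\<mu> N) j (cutoff_prod_mat e d j j) (cutoff_defect e d j))" for N
    using n by (intro Eavg_cutoff_sq_power_le_gg_errors[OF P \<mu> d _ neg]) simp
  show "(\<lambda>N. \<Sum>j\<in>{1..<n}. gg_error P (\<mu> N) j (cutoff_prod_mat e d j j) (cutoff_defect e d j)) \<longlonglongrightarrow> 0"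
    using gg by (intro tendsto_null_sum) simp
qed

lemma exists_cutoff_parameters:
  fixes e :: real
  assumes e: "e > 0"
  obtains n :: nat and d :: real where "n \<ge> 2" "d > 0" "1 + (real n - 1) * (- e + (real n - 1) * d) < 0"
proof
  define n where "n = nat \<lceil>2 / e\<rceil> + 2"
  show n: "n \<ge> 2" unfolding n_def by simp
  show d: "e / (2 * real n) > 0" using e n by simp
  have "(real n - 1) * (- e + (real n - 1) * (e / (2 * real n))) \<le> (real n - 1) * (- e / 2)"
    using n e by (intro mult_left_mono) (auto simp: field_simps)
  also have "\<dots> \<le> (2 / e + 1) * (- e / 2)"
    using real_nat_ceiling_ge[of "2 / e"] e unfolding n_def by (intro mult_right_mono_neg) auto
  also have "\<dots> = - 1 - e / 2" using e by (simp add: field_simps)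
  finally show "1 + (real n - 1) * (- e + (real n - 1) * (e / (2 * real n))) < 0" using e by linarith
qed

theorem mainTheorem12:
  fixes P :: "'w measure"
    and \<mu> :: "nat \<Rightarrow> 'w \<Rightarrow> 'h::{real_inner, complete_space, second_countable_topology} measure"
    and \<zeta> :: "real measure"
  assumes P: "prob_space P"
    and \<mu>_rand: "\<And>N. \<mu> N \<in> P \<rightarrow>\<^sub>M prob_algebra ball_space"
    and GG: "\<And>n f \<psi>. n \<ge> 1 \<Longrightarrow>
        f \<in> borel_measurable (PiM ({..<n} \<times> {..<n}) (\<lambda>_. borel)) \<Longrightarrow>
        (\<exists>B. \<forall>x. \<bar>f x\<bar> \<le> B) \<Longrightarrow>
        continuous_on {-1..1} \<psi> \<Longrightarrow>
        (\<lambda>N. \<bar>real n * Eavg P (\<mu> N) (n + 1) (\<lambda>\<sigma>. f (gram n \<sigma>) * \<psi> (inner (\<sigma> 0) (\<sigma> n)))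
              - Eavg P (\<mu> N) n (\<lambda>\<sigma>. f (gram n \<sigma>)) * Eavg P (\<mu> N) 2 (\<lambda>\<sigma>. \<psi> (inner (\<sigma> 0) (\<sigma> 1)))
              - (\<Sum>k\<in>{2..n}. Eavg P (\<mu> N) n (\<lambda>\<sigma>. f (gram n \<sigma>) * \<psi> (inner (\<sigma> 0) (\<sigma> (k - 1)))))\<bar>)
          \<longlonglongrightarrow> 0"
    and \<zeta>_prob: "prob_space \<zeta>"
    and \<zeta>_sets: "sets \<zeta> = sets (restrict_space borel {-1..1::real})"
    and \<zeta>_lim: "\<And>\<psi>. continuous_on {-1..1} \<psi> \<Longrightarrow>
        (\<lambda>N. Eavg P (\<mu> N) 2 (\<lambda>\<sigma>. \<psi> (inner (\<sigma> 0) (\<sigma> 1)))) \<longlonglongrightarrow> (\<integral>x. \<psi> x \<partial>\<zeta>)"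
  shows "\<forall>\<epsilon>>0. \<forall>\<eta>>0. \<exists>N0. \<forall>N\<ge>N0.
           prob_space.prob P {\<omega> \<in> space P.
              measure (\<mu> N \<omega> \<Otimes>\<^sub>M \<mu> N \<omega>) {z \<in> space (\<mu> N \<omega> \<Otimes>\<^sub>M \<mu> N \<omega>). inner (fst z) (snd z) < - \<epsilon>} > \<epsilon> / 3} < \<eta>"
proof (intro allI impI)
  fix \<epsilon> \<eta> :: real
  assume \<epsilon>: "\<epsilon> > 0" and \<eta>: "\<eta> > 0"
  then have \<epsilon>3: "\<epsilon> / 3 > 0" by simp
  obtain n d where n: "n \<ge> 2" and d: "d > 0" and neg: "1 + (real n - 1) * (- \<epsilon> + (real n - 1) * d) < 0"
    using exists_cutoff_parameters[OF \<epsilon>] .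
  have "(\<lambda>N. gg_error P (\<mu> N) j (cutoff_prod_mat \<epsilon> d j j) (cutoff_defect \<epsilon> d j)) \<longlonglongrightarrow> 0" if "j \<ge> 1" for j
    unfolding gg_error_def using that abs_cutoff_prod_mat_le_1
    by (intro GG borel_measurable_cutoff_prod_mat continuous_on_cutoff_defect) blast+
  then have "(\<lambda>N. Eavg P (\<mu> N) 2 (\<lambda>\<sigma>. (cutoff \<epsilon> d 2 (inner (\<sigma> 0) (\<sigma> 1)))\<^sup>2) / (\<epsilon> / 3)) \<longlonglongrightarrow> 0"
    by (intro tendsto_divide_zero Eavg_cutoff_sq_tendsto_0[OF P \<mu>_rand d n neg])
  then have "eventually (\<lambda>N. Eavg P (\<mu> N) 2 (\<lambda>\<sigma>. (cutoff \<epsilon> d 2 (inner (\<sigma> 0) (\<sigma> 1)))\<^sup>2) / (\<epsilon> / 3) < \<eta>)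
      sequentially"
    using \<eta> by (rule order_tendstoD(2))
  then have "eventually (\<lambda>N. prob_space.prob P {\<omega> \<in> space P.
      measure (\<mu> N \<omega> \<Otimes>\<^sub>M \<mu> N \<omega>) {z \<in> space (\<mu> N \<omega> \<Otimes>\<^sub>M \<mu> N \<omega>). inner (fst z) (snd z) < - \<epsilon>} > \<epsilon> / 3}
      < \<eta>) sequentially"
    by eventually_elim (rule le_less_trans[OF prob_overlap_mass_gt_le_Eavg_cutoff_sq[OF P \<mu>_rand d \<epsilon>3]])
  then show "\<exists>N0. \<forall>N\<ge>N0. prob_space.prob P {\<omega> \<in> space P.
      measure (\<mu> N \<omega> \<Otimes>\<^sub>M \<mu> N \<omega>) {z \<in> space (\<mu> N \<omega> \<Otimes>\<^sub>M \<mu> N \<omega>). inner (fst z) (snd z) < - \<epsilon>} > \<epsilon> / 3} < \<eta>"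
    unfolding eventually_sequentially .
qed

end
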